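(* Let $\mathcal{P}=\{P_1,\ldots,P_n\}$, let $\mathcal{Q}\subseteq 2^{\mathcal{P}}$ and let $\mathcal{F}\subseteq 2^{\mathcal{P}}$ be a fail-prone system. Let $I=\langle \xi_{\mathcal{Q}_{\bar X}},\ \xi_{\mathcal{Q}_{\bar Y}},\ \lambda,\ \delta\rangle\subseteq\mathbb{B}(\bar X,\bar Y,\bar T)$ and let $\mathcal{G}$ be a Gröbner basis for $I$. If $|SM(\mathcal{G})|=|\mathcal{Q}|^2\cdot|\mathcal{F}^*|$, then $\mathcal{Q}$ fulfills dissemination consistency with respect to $\mathcal{F}$, i.e. $Q_1\cap Q_2\not\subseteq F$ for all $Q_1,Q_2\in\mathcal{Q}$ and all $F\in\mathcal{F}$.
   Context: $\mathbb{B}=\mathbb{F}_2$; $\mathbb{B}(\bar X,\bar Y,\bar T)$ is the Boolean polynomial ring $\mathbb{B}[X_1,\ldots,X_n,Y_1,\ldots,Y_n,T_1,\ldots,T_n]$ modulo $\langle X_i^2-X_i,Y_i^2-Y_i,T_i^2-T_i\rangle$. $\varphi:2^{\mathcal{P}}\to\mathbb{B}^n$ sends a set to its indicator vector. For $S\subseteq\mathcal{P}$, $\xi_S(\bar Z)=\prod_{i=1}^n(1+Z_i+\varphi(S)_i)$; for $\mathcal{A}\subseteq 2^{\mathcal{P}}$, $\xi_{\mathcal{A}_{\bar Z}}=\prod_{A\in\mathcal{A}}(\xi_A(\bar Z)+1)$. $\gamma(\bar X,\bar Y)=\prod_{i=1}^n(X_iY_i+Y_i+1)+1$, and $\lambda(\bar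 T)=\prod_{F\in\mathcal{F}}\gamma(\varphi(F),\bar T)$. $\delta(\bar X,\bar Y,\bar T)=\prod_{i=1}^n(T_iX_iY_i+X_iY_i+1)$. $\mathcal{F}^*=\{F'\subseteq F: F\in\mathcal{F}\}$. A fail-prone system is a collection of subsets of $\mathcal{P}$ none of which is contained in another. Monomial order: lexicographic with block order $\bar T<\bar Y<\bar X$ and within each block $X_n\prec\cdots\prec X_1$ etc. A Gröbner basis of $I$ is a generating set $\mathcal{G}$ such that every nonzero $f\in I$ has leading monomial divisible by that of some $g\in\mathcal{G}$; $SM(\mathcal{G})$ is the set of multilinear monomials not in the ideal generated by the leading monomials of elements of $I$. *)

theory Defs
  imports Main
begin

text \<open>Processes are P_1..P_n, identified with indices 1..n. Variables X_i, Y_i, T_i.\<close>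

datatype var = X nat | Y nat | T nat

definition Vars :: "nat \<Rightarrow> var set" where
  "Vars n = {X i | i. 1 \<le> i \<and> i \<le> n} \<union> {Y i | i. 1 \<le> i \<and> i \<le> n} \<union> {T i | i. 1 \<le> i \<and> i \<le> n}"

text \<open>Elements of B(X,Y,T) = B[X,Y,T]/<v^2-v> are represented by their unique
multilinear (reduced) representative: a finite set of multilinear monomials, a
multilinear monomial being a set of variables.  Addition is symmetric difference,
multiplication multiplies monomials (union of variable sets, since v^2=v) and
reduces coefficients modulo 2.\<close>

type_synonym monom = "var set"
type_synonym bpoly = "monom set"

definition bpolys :: "nat \<Rightarrow> bpoly set" where
  "bpolys n = {p. p \<subseteq> Pow (Vars n)}"

definition bp_zero :: bpoly where "bp_zero = {}"
definition bp_one :: bpoly where "bp_one = {{}}"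
definition bp_var :: "var \<Rightarrow> bpoly" where "bp_var v = {{v}}"
definition bp_const :: "bool \<Rightarrow> bpoly" where "bp_const b = (if b then bp_one else bp_zero)"

definition bp_add :: "bpoly \<Rightarrow> bpoly \<Rightarrow> bpoly" where
  "bp_add p q = (p - q) \<union> (q - p)"

definition bp_mult :: "bpoly \<Rightarrow> bpoly \<Rightarrow> bpoly" where
  "bp_mult p q = {m. odd (card {(a, b). a \<in> p \<and> b \<in> q \<and> a \<union> b = m})}"

definition bp_prod_idx :: "nat \<Rightarrow> (nat \<Rightarrow> bpoly) \<Rightarrow> bpoly" where
  "bp_prod_idx n f = foldr (\<lambda>i acc. bp_mult (f i) acc) [1..<Suc n] bp_one"

definition bp_prod_set :: "('a \<Rightarrow> bpoly) \<Rightarrow> 'a set \<Rightarrow> bpoly" where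
  "bp_prod_set f A = Finite_Set.fold (\<lambda>a acc. bp_mult (f a) acc) bp_one A"

inductive_set bideal :: "nat \<Rightarrow> bpoly set \<Rightarrow> bpoly set" for n :: nat and G :: "bpoly set" where
  zero: "bp_zero \<in> bideal n G"
| gen: "g \<in> G \<Longrightarrow> g \<in> bideal n G"
| add: "a \<in> bideal n G \<Longrightarrow> b \<in> bideal n G \<Longrightarrow> bp_add a b \<in> bideal n G"
| mult: "a \<in> bideal n G \<Longrightarrow> r \<in> bpolys n \<Longrightarrow> bp_mult r a \<in> bideal n G"

text \<open>Lexicographic order with block order T < Y < X and within each block
X_n < ... < X_1 (similarly for Y, T).  key gives the position of a variable in
this total order on Vars n (larger key = larger variable).\<close>

fun vkey :: "nat \<Rightarrow> var \<Rightarrow> nat" where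
  "vkey n (T i) = n + 1 - i"
| "vkey n (Y i) = (n + 1) + (n + 1 - i)"
| "vkey n (X i) = 2 * (n + 1) + (n + 1 - i)"

definition mono_less :: "nat \<Rightarrow> monom \<Rightarrow> monom \<Rightarrow> bool" where
  "mono_less n m1 m2 \<longleftrightarrow> m1 \<noteq> m2 \<and>
     (\<exists>v \<in> m2 - m1. \<forall>u \<in> (m1 - m2) \<union> (m2 - m1). u \<noteq> v \<longrightarrow> vkey n u < vkey n v)"

definition LM :: "nat \<Rightarrow> bpoly \<Rightarrow> monom" where
  "LM n p = (THE m. m \<in> p \<and> (\<forall>m' \<in> p. m' \<noteq> m \<longrightarrow> mono_less n m' m))"

definition is_groebner_basis :: "nat \<Rightarrow> bpoly set \<Rightarrow> bpoly set \<Rightarrow> bool" where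
  "is_groebner_basis n G I \<longleftrightarrow> G \<subseteq> bpolys n \<and> bideal n G = I \<and>
     (\<forall>f \<in> I. f \<noteq> bp_zero \<longrightarrow> (\<exists>g \<in> G. g \<noteq> bp_zero \<and> LM n g \<subseteq> LM n f))"

definition SM :: "nat \<Rightarrow> bpoly set \<Rightarrow> monom set" where
  "SM n I = {m. m \<subseteq> Vars n \<and> {m} \<notin> bideal n {{LM n f} | f. f \<in> I \<and> f \<noteq> bp_zero}}"

definition phi :: "nat set \<Rightarrow> nat \<Rightarrow> bpoly" where
  "phi S i = bp_const (i \<in> S)"

definition xi :: "nat \<Rightarrow> nat set \<Rightarrow> (nat \<Rightarrow> bpoly) \<Rightarrow> bpoly" where
  "xi n S Z = bp_prod_idx n (\<lambda>i. bp_add (bp_add bp_one (Z i)) (phi S i))"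

definition xi_sys :: "nat \<Rightarrow> nat set set \<Rightarrow> (nat \<Rightarrow> bpoly) \<Rightarrow> bpoly" where
  "xi_sys n \<A> Z = bp_prod_set (\<lambda>A. bp_add (xi n A Z) bp_one) \<A>"

definition gamma :: "nat \<Rightarrow> (nat \<Rightarrow> bpoly) \<Rightarrow> (nat \<Rightarrow> bpoly) \<Rightarrow> bpoly" where
  "gamma n Xs Ys = bp_add (bp_prod_idx n (\<lambda>i. bp_add (bp_add (bp_mult (Xs i) (Ys i)) (Ys i)) bp_one)) bp_one"

definition lambda_poly :: "nat \<Rightarrow> nat set set \<Rightarrow> bpoly" where
  "lambda_poly n \<F> = bp_prod_set (\<lambda>F. gamma n (phi F) (\<lambda>i. bp_var (T i))) \<F>"

definition delta_poly :: "nat \<Rightarrow> bpoly" where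
  "delta_poly n = bp_prod_idx n (\<lambda>i. bp_add (bp_add
      (bp_mult (bp_var (T i)) (bp_mult (bp_var (X i)) (bp_var (Y i))))
      (bp_mult (bp_var (X i)) (bp_var (Y i)))) bp_one)"

definition the_ideal :: "nat \<Rightarrow> nat set set \<Rightarrow> nat set set \<Rightarrow> bpoly set" where
  "the_ideal n \<Q> \<F> = bideal n {xi_sys n \<Q> (\<lambda>i. bp_var (X i)), xi_sys n \<Q> (\<lambda>i. bp_var (Y i)),
                                 lambda_poly n \<F>, delta_poly n}"

definition fail_prone :: "nat \<Rightarrow> nat set set \<Rightarrow> bool" where
  "fail_prone n \<F> \<longleftrightarrow> (\<forall>F \<in> \<F>. F \<subseteq> {1..n}) \<and> (\<forall>A \<in> \<F>. \<forall>B \<in> \<F>. A \<subseteq> B \<longrightarrow> A = B)"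

definition downclosure :: "nat set set \<Rightarrow> nat set set" where
  "downclosure \<F> = {F'. \<exists>F \<in> \<F>. F' \<subseteq> F}"

end

theory Submission
  imports Defs
begin

(* A point of B^(3n) is modelled by the set A of variables it sets to 1; a polynomial is
   evaluated there by counting, modulo 2, its monomials contained in A.  A multilinear
   polynomial is determined by its values, and an ideal generated by finitely many g
   contains every p vanishing on their common zeros V: it contains the Boolean disjunction h
   of the generators, and p = p h.  Hence distinct sets of standard monomials of I give
   distinct functions on V, and |SM(I)| <= |V|.
   A zero of the four generators is a point whose X-, Y- and T-blocks are some Q1, Q2 in Q
   and F' in F* such that the intersection of Q1 and Q2 is not contained in F'.  The blocks
   determine the point, so if the intersection of Q1 and Q2 lies in some F in F, then the
   triple (Q1, Q2, F) comes from no zero and |SM(I)| <= |V| < |Q|^2 |F*|. *)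

section \<open>Evaluating Boolean polynomials at points\<close>

definition bp_eval :: "var set \<Rightarrow> bpoly \<Rightarrow> bool" where
  "bp_eval A p \<longleftrightarrow> odd (card {m \<in> p. m \<subseteq> A})"

lemma Vars_eq: "Vars n = X ` {1..n} \<union> Y ` {1..n} \<union> T ` {1..n}"
  unfolding Vars_def by auto

lemma finite_Vars [simp]: "finite (Vars n)"
  by (simp add: Vars_eq)

lemma bpolys_finite: "p \<in> bpolys n \<Longrightarrow> finite p"
  unfolding bpolys_def by (auto intro: finite_subset)

lemma bp_mult_subset_unions: "bp_mult p q \<subseteq> (\<lambda>(a, b). a \<union> b) ` (p \<times> q)"
proof
  fix m assume "m \<in> bp_mult p q"
  then have "odd (card {(a, b). a \<in> p \<and> b \<in> q \<and> a \<union> b = m})"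
    unfolding bp_mult_def by simp
  then have "{(a, b). a \<in> p \<and> b \<in> q \<and> a \<union> b = m} \<noteq> {}"
    by (intro notI) simp
  then show "m \<in> (\<lambda>(a, b). a \<union> b) ` (p \<times> q)" by force
qed

lemma finite_bp_add [simp]: "finite p \<Longrightarrow> finite q \<Longrightarrow> finite (bp_add p q)"
  unfolding bp_add_def by auto

lemma finite_bp_mult [simp]: "finite p \<Longrightarrow> finite q \<Longrightarrow> finite (bp_mult p q)"
  using bp_mult_subset_unions by (rule finite_subset) auto

lemma finite_bp_one [simp]: "finite bp_one"
  and finite_bp_zero [simp]: "finite bp_zero"
  and finite_bp_var [simp]: "finite (bp_var v)"
  and finite_bp_const [simp]: "finite (bp_const b)"
  by (simp_all add: bp_one_def bp_zero_def bp_var_def bp_const_def)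

lemma bpolys_add [simp]: "p \<in> bpolys n \<Longrightarrow> q \<in> bpolys n \<Longrightarrow> bp_add p q \<in> bpolys n"
  unfolding bpolys_def bp_add_def by auto

lemma bpolys_mult [simp]: "p \<in> bpolys n \<Longrightarrow> q \<in> bpolys n \<Longrightarrow> bp_mult p q \<in> bpolys n"
  using bp_mult_subset_unions[of p q] unfolding bpolys_def by blast

lemma bpolys_one [simp]: "bp_one \<in> bpolys n"
  and bpolys_zero [simp]: "bp_zero \<in> bpolys n"
  and bpolys_const [simp]: "bp_const b \<in> bpolys n"
  unfolding bpolys_def bp_one_def bp_zero_def bp_const_def by auto

lemma bpolys_var [simp]: "v \<in> Vars n \<Longrightarrow> bp_var v \<in> bpolys n"
  unfolding bpolys_def bp_var_def by auto

lemma Vars_iff [simp]: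
  "X i \<in> Vars n \<longleftrightarrow> i \<in> {1..n}" "Y i \<in> Vars n \<longleftrightarrow> i \<in> {1..n}" "T i \<in> Vars n \<longleftrightarrow> i \<in> {1..n}"
  unfolding Vars_def by auto

lemma image_X_subset_Vars: "X ` {1..n} \<subseteq> Vars n"
  and image_Y_subset_Vars: "Y ` {1..n} \<subseteq> Vars n"
  by auto

lemma bp_eval_zero [simp]: "\<not> bp_eval A bp_zero"
  and bp_eval_one [simp]: "bp_eval A bp_one"
  and bp_eval_var [simp]: "bp_eval A (bp_var v) \<longleftrightarrow> v \<in> A"
  and bp_eval_const [simp]: "bp_eval A (bp_const b) \<longleftrightarrow> b"
  by (auto simp: bp_eval_def bp_zero_def bp_one_def bp_var_def bp_const_def Collect_conv_if)

lemma odd_card_sym_diff: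
  assumes "finite P" "finite Q"
  shows "odd (card ((P - Q) \<union> (Q - P))) \<longleftrightarrow> odd (card P) \<noteq> odd (card Q)"
proof -
  have "card ((P - Q) \<union> (Q - P)) = card (P - Q) + card (Q - P)"
    using assms by (intro card_Un_disjoint) auto
  moreover have "card P = card (P \<inter> Q) + card (P - Q)" "card Q = card (P \<inter> Q) + card (Q - P)"
    using assms card_Int_Diff[of P Q] card_Int_Diff[of Q P] by (auto simp: Int_commute)
  ultimately show ?thesis by presburger
qed

lemma bp_eval_add [simp]:
  assumes "finite p" "finite q"
  shows "bp_eval A (bp_add p q) \<longleftrightarrow> bp_eval A p \<noteq> bp_eval A q"
proof -
  have "{m \<in> bp_add p q. m \<subseteq> A} = ({m \<in> p. m \<subseteq> A} - {m \<in> q. m \<subseteq> A}) \<union> ({m \<in> q. m \<subseteq> A} - {m \<in> p. m \<subseteq> A})"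
    unfolding bp_add_def by auto
  then show ?thesis
    unfolding bp_eval_def using assms by (simp add: odd_card_sym_diff)
qed

lemma bp_eval_mult [simp]:
  assumes "finite p" "finite q"
  shows "bp_eval A (bp_mult p q) \<longleftrightarrow> bp_eval A p \<and> bp_eval A q"
proof -
  define P where "P = {a \<in> p. a \<subseteq> A}"
  define Q where "Q = {b \<in> q. b \<subseteq> A}"
  define fibre where "fibre m = {(a, b). a \<in> p \<and> b \<in> q \<and> a \<union> b = m}" for m
  let ?U = "(\<lambda>(a, b). a \<union> b) ` (P \<times> Q)"
  have fin: "finite (P \<times> Q)"
    using assms by (simp add: P_def Q_def)
  have "card (P \<times> Q) = (\<Sum>m\<in>?U. card {x \<in> P \<times> Q. (\<lambda>(a, b). a \<union> b) x = m})"
    unfolding card_eq_sum by (rule sum.image_gen[OF fin])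
  also have "\<dots> = (\<Sum>m\<in>?U. card (fibre m))"
    by (intro sum.cong refl arg_cong[where f = card]) (auto simp: fibre_def P_def Q_def)
  finally have "odd (card (P \<times> Q)) \<longleftrightarrow> odd (card {m \<in> ?U. odd (card (fibre m))})"
    using fin by (simp add: even_sum_iff)
  also have "{m \<in> ?U. odd (card (fibre m))} = {m \<in> bp_mult p q. m \<subseteq> A}"
  proof -
    have "m \<in> ?U" if "m \<subseteq> A" "odd (card (fibre m))" for m
    proof -
      from that(2) have "fibre m \<noteq> {}"
        by (intro notI) simp
      with that(1) show ?thesis
        by (force simp: fibre_def P_def Q_def)
    qed
    then show ?thesis
      by (auto simp: bp_mult_def fibre_def P_def Q_def)
  qed
  finally show ?thesis
    by (simp add: bp_eval_def P_def Q_def card_cartesian_product)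
qed

lemma bp_eval_nonzero:
  assumes "finite p" "p \<noteq> bp_zero"
  obtains A where "bp_eval A p"
proof -
  obtain m where m: "m \<in> p" "\<forall>m' \<in> p. m' \<subseteq> m \<longrightarrow> m = m'"
    using finite_has_minimal[of p] assms by (auto simp: bp_zero_def)
  then have "{m' \<in> p. m' \<subseteq> m} = {m}"
    by auto
  then show ?thesis
    using that[of m] by (simp add: bp_eval_def)
qed

lemma bp_eval_inject:
  assumes "finite p" "finite q" "\<And>A. bp_eval A p \<longleftrightarrow> bp_eval A q"
  shows "p = q"
proof -
  have "bp_add p q = bp_zero"
    using bp_eval_nonzero[of "bp_add p q"] assms by auto
  then show ?thesis
    by (auto simp: bp_add_def bp_zero_def)
qed

lemma foldr_bp_mult:
  assumes "\<forall>i \<in> set idx. f i \<in> bpolys n"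
  shows "foldr (\<lambda>i acc. bp_mult (f i) acc) idx bp_one \<in> bpolys n \<and>
    (bp_eval A (foldr (\<lambda>i acc. bp_mult (f i) acc) idx bp_one) \<longleftrightarrow> (\<forall>i \<in> set idx. bp_eval A (f i)))"
  using assms by (induction idx) (auto simp: bpolys_finite)

lemma
  assumes "\<And>i. i \<in> {1..n} \<Longrightarrow> f i \<in> bpolys n"
  shows bp_prod_idx_in_bpolys: "bp_prod_idx n f \<in> bpolys n"
    and bp_eval_prod_idx: "bp_eval A (bp_prod_idx n f) \<longleftrightarrow> (\<forall>i \<in> {1..n}. bp_eval A (f i))"
proof -
  have "\<forall>i \<in> set [1..<Suc n]. f i \<in> bpolys n"
    using assms by auto
  from foldr_bp_mult[OF this, of A]
  show "bp_prod_idx n f \<in> bpolys n" "bp_eval A (bp_prod_idx n f) \<longleftrightarrow> (\<forall>i \<in> {1..n}. bp_eval A (f i))"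
    unfolding bp_prod_idx_def set_upt atLeastLessThanSuc_atLeastAtMost by auto
qed

lemma fold_graph_bp_mult:
  assumes "fold_graph (\<lambda>a acc. bp_mult (f a) acc) bp_one S y" "f ` S \<subseteq> bpolys n"
  shows "y \<in> bpolys n \<and> (\<forall>A. bp_eval A y \<longleftrightarrow> (\<forall>a \<in> S. bp_eval A (f a)))"
  using assms by (induction rule: fold_graph.induct) (auto simp: bpolys_finite)

text \<open>On infinite arguments \<open>bp_mult\<close> is junk (\<open>card\<close> is 0) and need not be associative,
  so instead of the commutative-fold interface all results of the fold are identified through
  their values.\<close>
lemma
  assumes "finite S" "f ` S \<subseteq> bpolys n"
  shows bp_prod_set_in_bpolys: "bp_prod_set f S \<in> bpolys n"
    and bp_eval_prod_set: "bp_eval A (bp_prod_set f S) \<longleftrightarrow> (\<forall>a \<in> S. bp_eval A (f a))"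
proof -
  let ?g = "\<lambda>a acc. bp_mult (f a) acc"
  obtain y where y: "fold_graph ?g bp_one S y"
    using finite_imp_fold_graph[OF assms(1), of ?g bp_one] by blast
  have "(THE y. fold_graph ?g bp_one S y) = y"
  proof (rule the_equality)
    fix y' assume "fold_graph ?g bp_one S y'"
    then show "y' = y"
      using fold_graph_bp_mult[OF _ assms(2)] y by (intro bp_eval_inject) (auto dest: bpolys_finite)
  qed (fact y)
  then have "bp_prod_set f S = y"
    using assms(1) by (simp add: bp_prod_set_def Finite_Set.fold_def)
  then show "bp_prod_set f S \<in> bpolys n" "bp_eval A (bp_prod_set f S) \<longleftrightarrow> (\<forall>a \<in> S. bp_eval A (f a))"
    using fold_graph_bp_mult[OF y assms(2)] by auto
qed

section \<open>Polynomials vanishing on the zeros of the generators\<close>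

lemma bideal_mono: "G \<subseteq> H \<Longrightarrow> bideal n G \<subseteq> bideal n H"
proof
  fix p assume "G \<subseteq> H" "p \<in> bideal n G"
  then show "p \<in> bideal n H"
    by (induction rule: bideal.induct[OF \<open>p \<in> bideal n G\<close>]) (auto intro: bideal.intros)
qed

text \<open>Over \<open>\<bbbB>\<close> the disjunction of \<open>g\<close> and \<open>h\<close> is \<open>g + (1 + g) h\<close>.\<close>
lemma bideal_contains_disjunction:
  assumes "finite G" "G \<subseteq> bpolys n"
  shows "\<exists>h \<in> bideal n G \<inter> bpolys n. \<forall>A. bp_eval A h \<longleftrightarrow> (\<exists>g \<in> G. bp_eval A g)"
  using assms
proof (induction G rule: finite_induct)
  case empty
  show ?case
    using bideal.zero bpolys_zero bp_eval_zero by blast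
next
  case (insert g G)
  then obtain h where h: "h \<in> bideal n G" "h \<in> bpolys n" "\<forall>A. bp_eval A h \<longleftrightarrow> (\<exists>g \<in> G. bp_eval A g)"
    by auto
  have "h \<in> bideal n (insert g G)"
    using h(1) bideal_mono[of G "insert g G"] by blast
  then have "bp_add g (bp_mult (bp_add bp_one g) h) \<in> bideal n (insert g G)"
    using insert.prems by (intro bideal.add bideal.mult) (auto intro: bideal.gen)
  moreover have g: "g \<in> bpolys n"
    using insert.prems by simp
  then have "bp_add g (bp_mult (bp_add bp_one g) h) \<in> bpolys n"
    using h(2) by simp
  moreover have "bp_eval A (bp_add g (bp_mult (bp_add bp_one g) h)) \<longleftrightarrow> (\<exists>g' \<in> insert g G. bp_eval A g')" for A
    using g h(2,3) bpolys_finite by auto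
  ultimately show ?case
    by blast
qed

definition zeros :: "nat \<Rightarrow> bpoly set \<Rightarrow> var set set" where
  "zeros n G = {A. A \<subseteq> Vars n \<and> (\<forall>g \<in> G. \<not> bp_eval A g)}"

lemma finite_zeros: "finite (zeros n G)"
  by (rule finite_subset[of _ "Pow (Vars n)"]) (auto simp: zeros_def)

lemma bp_eval_Int_Vars:
  assumes "p \<in> bpolys n"
  shows "bp_eval (A \<inter> Vars n) p \<longleftrightarrow> bp_eval A p"
proof -
  have "{m \<in> p. m \<subseteq> A \<inter> Vars n} = {m \<in> p. m \<subseteq> A}"
    using assms by (auto simp: bpolys_def)
  then show ?thesis
    by (simp add: bp_eval_def)
qed

lemma vanishing_on_zeros_in_bideal:
  assumes "finite G" "G \<subseteq> bpolys n" "p \<in> bpolys n" "\<forall>A \<in> zeros n G. \<not> bp_eval A p"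
  shows "p \<in> bideal n G"
proof -
  obtain h where h: "h \<in> bideal n G" "h \<in> bpolys n" "\<And>A. bp_eval A h \<longleftrightarrow> (\<exists>g \<in> G. bp_eval A g)"
    using bideal_contains_disjunction[OF assms(1,2)] by blast
  have "bp_eval A h" if "bp_eval A p" for A
  proof -
    have "A \<inter> Vars n \<notin> zeros n G"
      using that assms(3,4) bp_eval_Int_Vars by blast
    then obtain g where "g \<in> G" "bp_eval (A \<inter> Vars n) g"
      by (auto simp: zeros_def)
    then show ?thesis
      using h(3) assms(2) bp_eval_Int_Vars by blast
  qed
  then have "bp_mult p h = p"
    using assms(3) h(2) by (intro bp_eval_inject) (auto simp: bpolys_finite)
  moreover have "bp_mult p h \<in> bideal n G"
    using h(1) assms(3) by (rule bideal.mult)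
  ultimately show ?thesis
    by simp
qed

section \<open>Leading and standard monomials\<close>

lemma inj_on_vkey: "inj_on (vkey n) (Vars n)"
  unfolding Vars_def inj_on_def by auto

lemma exists_top_var:
  assumes "finite D" "D \<noteq> {}" "D \<subseteq> Vars n"
  obtains v where "v \<in> D" "\<And>u. u \<in> D \<Longrightarrow> u \<noteq> v \<Longrightarrow> vkey n u < vkey n v"
proof -
  have "Max (vkey n ` D) \<in> vkey n ` D"
    using assms(1,2) by simp
  then obtain v where v: "v \<in> D" "vkey n v = Max (vkey n ` D)"
    by (metis imageE)
  have "vkey n u < vkey n v" if "u \<in> D" "u \<noteq> v" for u
  proof -
    have "vkey n u \<le> vkey n v"
      using v(2) that(1) assms(1) by simp
    moreover have "vkey n u \<noteq> vkey n v"
      using inj_on_vkey[of n] that v(1) assms(3) by (auto dest: inj_onD)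
    ultimately show ?thesis
      by simp
  qed
  with v(1) show ?thesis
    using that by blast
qed

lemma mono_less_asym: "mono_less n m1 m2 \<Longrightarrow> \<not> mono_less n m2 m1"
  unfolding mono_less_def by (metis DiffD1 DiffD2 UnCI less_asym)

text \<open>Induction on \<open>p\<close>: the monomials of \<open>p\<close> containing the largest variable in which two
  of them differ form a proper subset, whose greatest element is greatest in \<open>p\<close>.\<close>
lemma exists_mono_less_greatest:
  assumes "finite p" "p \<noteq> {}" "p \<subseteq> Pow (Vars n)"
  shows "\<exists>m \<in> p. \<forall>m' \<in> p. m' \<noteq> m \<longrightarrow> mono_less n m' m"
  using assms
proof (induction p rule: finite_psubset_induct)
  case (psubset p)
  show ?case
  proof (cases "\<exists>m. p = {m}")
    case True
    then show ?thesis
      by auto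
  next
    case False
    define D where "D = (\<Union>a \<in> p. \<Union>b \<in> p. a - b)"
    have "D \<subseteq> Vars n"
      using psubset.prems(2) by (auto simp: D_def)
    moreover have "D \<noteq> {}"
    proof -
      obtain a where "a \<in> p"
        using psubset.prems(1) by blast
      moreover have "p \<noteq> {a}"
        using False by blast
      ultimately obtain b where "b \<in> p" "a \<noteq> b"
        by blast
      then have "a - b \<noteq> {} \<or> b - a \<noteq> {}"
        by (metis Diff_eq_empty_iff subset_antisym)
      then show ?thesis
        using \<open>a \<in> p\<close> \<open>b \<in> p\<close> unfolding D_def by blast
    qed
    moreover have "finite D"
      using \<open>D \<subseteq> Vars n\<close> by (rule finite_subset) simp
    ultimately obtain v where v: "v \<in> D" "\<And>u. u \<in> D \<Longrightarrow> u \<noteq> v \<Longrightarrow> vkey n u < vkey n v"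
      using exists_top_var by metis
    define p' where "p' = {m \<in> p. v \<in> m}"
    obtain a b where "a \<in> p" "b \<in> p" "v \<in> a - b"
      using v(1) unfolding D_def by blast
    then have "p' \<subset> p" "p' \<noteq> {}"
      unfolding p'_def by auto
    moreover have "p' \<subseteq> Pow (Vars n)"
      using psubset.prems(2) unfolding p'_def by auto
    ultimately obtain m where m: "m \<in> p'" "\<forall>m' \<in> p'. m' \<noteq> m \<longrightarrow> mono_less n m' m"
      using psubset.IH[of p'] by auto
    have outside: "mono_less n m' m" if "m' \<in> p" "m' \<notin> p'" for m'
    proof -
      have "v \<in> m - m'"
        using that m(1) by (auto simp: p'_def)
      moreover have "(m' - m) \<union> (m - m') \<subseteq> D"
        using that(1) m(1) by (auto simp: D_def p'_def)
      moreover have "m' \<noteq> m"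
        using \<open>v \<in> m - m'\<close> by blast
      ultimately show ?thesis
        unfolding mono_less_def using v(2) by blast
    qed
    show ?thesis
    proof (intro bexI[of _ m] ballI impI)
      show "m \<in> p"
        using m(1) by (simp add: p'_def)
      fix m' assume "m' \<in> p" "m' \<noteq> m"
      then show "mono_less n m' m"
        using m(2) outside by (cases "m' \<in> p'") auto
    qed
  qed
qed

lemma LM_in:
  assumes "p \<in> bpolys n" "p \<noteq> bp_zero"
  shows "LM n p \<in> p"
proof -
  have "finite p" "p \<noteq> {}" "p \<subseteq> Pow (Vars n)"
    using assms bpolys_finite by (auto simp: bpolys_def bp_zero_def)
  from exists_mono_less_greatest[OF this]
  obtain m where m: "m \<in> p" "\<forall>m' \<in> p. m' \<noteq> m \<longrightarrow> mono_less n m' m"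
    by blast
  have "LM n p = m"
    unfolding LM_def
  proof (rule the_equality)
    show "m \<in> p \<and> (\<forall>m' \<in> p. m' \<noteq> m \<longrightarrow> mono_less n m' m)"
      using m by blast
    fix m' assume m': "m' \<in> p \<and> (\<forall>m'' \<in> p. m'' \<noteq> m' \<longrightarrow> mono_less n m'' m')"
    show "m' = m"
    proof (rule ccontr)
      assume "m' \<noteq> m"
      then have "mono_less n m' m" "mono_less n m m'"
        using m m' by auto
      then show False
        using mono_less_asym by blast
    qed
  qed
  with m(1) show ?thesis
    by simp
qed

lemma subset_SM_in_bpolys: "p \<subseteq> SM n I \<Longrightarrow> p \<in> bpolys n"
  unfolding SM_def bpolys_def by auto

lemma standard_poly_in_ideal_eq_zero:
  assumes "p \<in> I" "p \<subseteq> SM n I"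
  shows "p = bp_zero"
proof (rule ccontr)
  assume nonzero: "p \<noteq> bp_zero"
  moreover have "p \<in> bpolys n"
    using assms(2) by (rule subset_SM_in_bpolys)
  ultimately have "LM n p \<in> SM n I"
    using assms(2) LM_in by blast
  moreover have "{LM n p} \<in> bideal n {{LM n f} | f. f \<in> I \<and> f \<noteq> bp_zero}"
    using assms(1) nonzero by (blast intro: bideal.gen)
  ultimately show False
    by (simp add: SM_def)
qed

lemma card_SM_le_card_zeros:
  assumes "finite G" "G \<subseteq> bpolys n"
  shows "card (SM n (bideal n G)) \<le> card (zeros n G)"
proof -
  let ?S = "SM n (bideal n G)"
  have finite_S: "finite ?S"
    using subset_SM_in_bpolys bpolys_finite by blast
  have "inj_on (\<lambda>p. {A \<in> zeros n G. bp_eval A p}) (Pow ?S)"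
  proof (rule inj_onI)
    fix p q
    assume pq: "p \<in> Pow ?S" "q \<in> Pow ?S"
      and same_values: "{A \<in> zeros n G. bp_eval A p} = {A \<in> zeros n G. bp_eval A q}"
    then have polys: "p \<in> bpolys n" "q \<in> bpolys n"
      using subset_SM_in_bpolys by auto
    have "bp_add p q \<in> bideal n G"
    proof (rule vanishing_on_zeros_in_bideal[OF assms])
      show "\<forall>A \<in> zeros n G. \<not> bp_eval A (bp_add p q)"
        using same_values polys by (auto simp: bpolys_finite)
    qed (use polys in simp)
    moreover have "bp_add p q \<subseteq> ?S"
      using pq by (auto simp: bp_add_def)
    ultimately have "bp_add p q = bp_zero"
      by (rule standard_poly_in_ideal_eq_zero)
    then show "p = q"
      by (auto simp: bp_add_def bp_zero_def)
  qed
  then have "card (Pow ?S) \<le> card (Pow (zeros n G))"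
    by (rule card_inj_on_le) (auto simp: finite_zeros)
  then show ?thesis
    using finite_S finite_zeros by (simp add: card_Pow)
qed

section \<open>The generators of the ideal\<close>

text \<open>\<open>block_set n C A\<close> is the preimage under \<open>\<phi>\<close> of the \<open>C\<close>-coordinates of the point \<open>A\<close>.\<close>
definition block_set :: "nat \<Rightarrow> (nat \<Rightarrow> var) \<Rightarrow> var set \<Rightarrow> nat set" where
  "block_set n C A = {i \<in> {1..n}. C i \<in> A}"

lemma
  assumes "S \<subseteq> {1..n}" "C ` {1..n} \<subseteq> Vars n"
  shows xi_in_bpolys: "xi n S (\<lambda>i. bp_var (C i)) \<in> bpolys n"
    and bp_eval_xi: "bp_eval A (xi n S (\<lambda>i. bp_var (C i))) \<longleftrightarrow> block_set n C A = S"
proof -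
  let ?f = "\<lambda>i. bp_add (bp_add bp_one (bp_var (C i))) (phi S i)"
  have factors: "?f i \<in> bpolys n" if "i \<in> {1..n}" for i
  proof -
    have "C i \<in> Vars n"
      using assms(2) that by blast
    then show ?thesis
      by (simp add: phi_def)
  qed
  then show "xi n S (\<lambda>i. bp_var (C i)) \<in> bpolys n"
    unfolding xi_def by (rule bp_prod_idx_in_bpolys)
  have "bp_eval A (bp_prod_idx n ?f) \<longleftrightarrow> (\<forall>i \<in> {1..n}. bp_eval A (?f i))"
    using factors by (rule bp_eval_prod_idx)
  then have "bp_eval A (xi n S (\<lambda>i. bp_var (C i))) \<longleftrightarrow> (\<forall>i \<in> {1..n}. C i \<in> A \<longleftrightarrow> i \<in> S)"
    unfolding xi_def by (simp add: phi_def)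
  also have "\<dots> \<longleftrightarrow> block_set n C A = S"
    using assms(1) by (auto simp: block_set_def)
  finally show "bp_eval A (xi n S (\<lambda>i. bp_var (C i))) \<longleftrightarrow> block_set n C A = S" .
qed

lemma
  assumes "\<Q> \<subseteq> Pow {1..n}" "C ` {1..n} \<subseteq> Vars n"
  shows xi_sys_in_bpolys: "xi_sys n \<Q> (\<lambda>i. bp_var (C i)) \<in> bpolys n"
    and bp_eval_xi_sys: "bp_eval A (xi_sys n \<Q> (\<lambda>i. bp_var (C i))) \<longleftrightarrow> block_set n C A \<notin> \<Q>"
proof -
  have "finite \<Q>"
    using assms(1) finite_subset by blast
  moreover have factors: "(\<lambda>S. bp_add (xi n S (\<lambda>i. bp_var (C i))) bp_one) ` \<Q> \<subseteq> bpolys n"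
    using assms xi_in_bpolys by auto
  ultimately show "xi_sys n \<Q> (\<lambda>i. bp_var (C i)) \<in> bpolys n"
    unfolding xi_sys_def by (rule bp_prod_set_in_bpolys)
  have "bp_eval A (bp_add (xi n S (\<lambda>i. bp_var (C i))) bp_one) \<longleftrightarrow> block_set n C A \<noteq> S"
    if "S \<in> \<Q>" for S
  proof -
    have "S \<subseteq> {1..n}"
      using assms(1) that by blast
    then have "finite (xi n S (\<lambda>i. bp_var (C i)))"
      using assms(2) xi_in_bpolys bpolys_finite by blast
    then show ?thesis
      using bp_eval_xi[OF \<open>S \<subseteq> {1..n}\<close> assms(2)] by simp
  qed
  then show "bp_eval A (xi_sys n \<Q> (\<lambda>i. bp_var (C i))) \<longleftrightarrow> block_set n C A \<notin> \<Q>"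
    unfolding xi_sys_def bp_eval_prod_set[OF \<open>finite \<Q>\<close> factors] by blast
qed

lemma
  shows gamma_in_bpolys: "gamma n (phi F) (\<lambda>i. bp_var (T i)) \<in> bpolys n"
    and bp_eval_gamma: "bp_eval A (gamma n (phi F) (\<lambda>i. bp_var (T i))) \<longleftrightarrow> \<not> block_set n T A \<subseteq> F"
proof -
  let ?f = "\<lambda>i. bp_add (bp_add (bp_mult (phi F i) (bp_var (T i))) (bp_var (T i))) bp_one"
  have factors: "?f i \<in> bpolys n" if "i \<in> {1..n}" for i
    using that by (simp add: phi_def)
  then have "bp_prod_idx n ?f \<in> bpolys n"
    by (rule bp_prod_idx_in_bpolys)
  then show "gamma n (phi F) (\<lambda>i. bp_var (T i)) \<in> bpolys n"
    unfolding gamma_def by simp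
  have "bp_eval A (bp_prod_idx n ?f) \<longleftrightarrow> (\<forall>i \<in> {1..n}. bp_eval A (?f i))"
    using factors by (rule bp_eval_prod_idx)
  then have "bp_eval A (bp_prod_idx n ?f) \<longleftrightarrow> block_set n T A \<subseteq> F"
    by (auto simp: phi_def block_set_def)
  with \<open>bp_prod_idx n ?f \<in> bpolys n\<close>
  show "bp_eval A (gamma n (phi F) (\<lambda>i. bp_var (T i))) \<longleftrightarrow> \<not> block_set n T A \<subseteq> F"
    unfolding gamma_def by (simp add: bpolys_finite)
qed

lemma
  assumes "finite \<F>"
  shows lambda_poly_in_bpolys: "lambda_poly n \<F> \<in> bpolys n"
    and bp_eval_lambda_poly: "bp_eval A (lambda_poly n \<F>) \<longleftrightarrow> block_set n T A \<notin> downclosure \<F>"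
proof -
  have factors: "(\<lambda>F. gamma n (phi F) (\<lambda>i. bp_var (T i))) ` \<F> \<subseteq> bpolys n"
    using gamma_in_bpolys by blast
  with assms show "lambda_poly n \<F> \<in> bpolys n"
    unfolding lambda_poly_def by (rule bp_prod_set_in_bpolys)
  show "bp_eval A (lambda_poly n \<F>) \<longleftrightarrow> block_set n T A \<notin> downclosure \<F>"
    unfolding lambda_poly_def bp_eval_prod_set[OF assms factors] bp_eval_gamma downclosure_def
    by blast
qed

lemma
  shows delta_poly_in_bpolys: "delta_poly n \<in> bpolys n"
    and bp_eval_delta_poly:
      "bp_eval A (delta_poly n) \<longleftrightarrow> block_set n X A \<inter> block_set n Y A \<subseteq> block_set n T A"
proof -
  let ?f = "\<lambda>i. bp_add (bp_add (bp_mult (bp_var (T i)) (bp_mult (bp_var (X i)) (bp_var (Y i))))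
    (bp_mult (bp_var (X i)) (bp_var (Y i)))) bp_one"
  have factors: "?f i \<in> bpolys n" if "i \<in> {1..n}" for i
    using that by simp
  then show "delta_poly n \<in> bpolys n"
    unfolding delta_poly_def by (rule bp_prod_idx_in_bpolys)
  have "bp_eval A (bp_prod_idx n ?f) \<longleftrightarrow> (\<forall>i \<in> {1..n}. bp_eval A (?f i))"
    using factors by (rule bp_eval_prod_idx)
  then show "bp_eval A (delta_poly n) \<longleftrightarrow> block_set n X A \<inter> block_set n Y A \<subseteq> block_set n T A"
    unfolding delta_poly_def by (auto simp: block_set_def)
qed

definition generators :: "nat \<Rightarrow> nat set set \<Rightarrow> nat set set \<Rightarrow> bpoly set" where
  "generators n \<Q> \<F> = {xi_sys n \<Q> (\<lambda>i. bp_var (X i)), xi_sys n \<Q> (\<lambda>i. bp_var (Y i)),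
    lambda_poly n \<F>, delta_poly n}"

lemma the_ideal_eq_bideal_generators: "the_ideal n \<Q> \<F> = bideal n (generators n \<Q> \<F>)"
  by (simp add: the_ideal_def generators_def)

lemma finite_generators: "finite (generators n \<Q> \<F>)"
  by (simp add: generators_def)

lemma generators_in_bpolys:
  assumes "\<Q> \<subseteq> Pow {1..n}" "finite \<F>"
  shows "generators n \<Q> \<F> \<subseteq> bpolys n"
  using xi_sys_in_bpolys[OF assms(1) image_X_subset_Vars]
    xi_sys_in_bpolys[OF assms(1) image_Y_subset_Vars] lambda_poly_in_bpolys[OF assms(2)] delta_poly_in_bpolys
  by (simp add: generators_def)

lemma zeros_generators:
  assumes "\<Q> \<subseteq> Pow {1..n}" "finite \<F>"
  shows "zeros n (generators n \<Q> \<F>) =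
    {A \<in> Pow (Vars n). block_set n X A \<in> \<Q> \<and> block_set n Y A \<in> \<Q> \<and>
      block_set n T A \<in> downclosure \<F> \<and> \<not> block_set n X A \<inter> block_set n Y A \<subseteq> block_set n T A}"
  unfolding zeros_def generators_def
  by (auto simp: bp_eval_xi_sys[OF assms(1) image_X_subset_Vars]
    bp_eval_xi_sys[OF assms(1) image_Y_subset_Vars] bp_eval_lambda_poly[OF assms(2)] bp_eval_delta_poly)

lemma subset_Vars_eq_blocks:
  "A \<subseteq> Vars n \<Longrightarrow> A = X ` block_set n X A \<union> Y ` block_set n Y A \<union> T ` block_set n T A"
  unfolding Vars_def block_set_def by auto

lemma inj_on_blocks: "inj_on (\<lambda>A. (block_set n X A, block_set n Y A, block_set n T A)) (Pow (Vars n))"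
proof (rule inj_onI)
  fix A B
  assume "A \<in> Pow (Vars n)" "B \<in> Pow (Vars n)"
    and "(block_set n X A, block_set n Y A, block_set n T A) = (block_set n X B, block_set n Y B, block_set n T B)"
  then show "A = B"
    using subset_Vars_eq_blocks[of A n] subset_Vars_eq_blocks[of B n] by simp
qed

lemma card_zeros_generators_less:
  assumes "\<Q> \<subseteq> Pow {1..n}" "\<F> \<subseteq> Pow {1..n}"
    and "Q1 \<in> \<Q>" "Q2 \<in> \<Q>" "F \<in> \<F>" "Q1 \<inter> Q2 \<subseteq> F"
  shows "card (zeros n (generators n \<Q> \<F>)) < card \<Q> ^ 2 * card (downclosure \<F>)"
proof -
  let ?blocks = "\<lambda>A. (block_set n X A, block_set n Y A, block_set n T A)"
  let ?Z = "zeros n (generators n \<Q> \<F>)"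
  let ?P = "\<Q> \<times> \<Q> \<times> downclosure \<F>"
  have "finite \<Q>" "finite \<F>"
    using assms(1,2) finite_subset by blast+
  moreover have "downclosure \<F> \<subseteq> Pow {1..n}"
    using assms(2) by (auto simp: downclosure_def)
  ultimately have "finite ?P"
    using finite_subset by blast
  have "inj_on ?blocks ?Z"
    using inj_on_blocks by (rule inj_on_subset) (auto simp: zeros_def)
  moreover have "?blocks ` ?Z \<subseteq> ?P - {(Q1, Q2, F)}"
    using zeros_generators[OF assms(1) \<open>finite \<F>\<close>] assms(6) by auto
  moreover have "finite (?P - {(Q1, Q2, F)})"
    using \<open>finite ?P\<close> by simp
  ultimately have "card ?Z \<le> card (?P - {(Q1, Q2, F)})"
    by (rule card_inj_on_le)
  also have "\<dots> < card ?P"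
    using \<open>finite ?P\<close> assms(3-5) by (intro card_Diff1_less) (auto simp: downclosure_def)
  also have "\<dots> = card \<Q> ^ 2 * card (downclosure \<F>)"
    by (simp add: card_cartesian_product power2_eq_square)
  finally show ?thesis .
qed

theorem mainTheorem4:
  fixes n :: nat and \<Q> \<F> :: "nat set set" and G :: "bpoly set"
  assumes "\<forall>Q \<in> \<Q>. Q \<subseteq> {1..n}"
    and "fail_prone n \<F>"
    and "is_groebner_basis n G (the_ideal n \<Q> \<F>)"
    and "card (SM n (the_ideal n \<Q> \<F>)) = card \<Q> ^ 2 * card (downclosure \<F>)"
  shows "\<forall>Q1 \<in> \<Q>. \<forall>Q2 \<in> \<Q>. \<forall>F \<in> \<F>. \<not> (Q1 \<inter> Q2 \<subseteq> F)"
proof (intro ballI notI)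
  fix Q1 Q2 F
  assume "Q1 \<in> \<Q>" "Q2 \<in> \<Q>" "F \<in> \<F>" "Q1 \<inter> Q2 \<subseteq> F"
  have "\<Q> \<subseteq> Pow {1..n}" "\<F> \<subseteq> Pow {1..n}"
    using assms(1,2) by (auto simp: fail_prone_def)
  then have "finite \<F>"
    using finite_subset by blast
  have "card (SM n (the_ideal n \<Q> \<F>)) \<le> card (zeros n (generators n \<Q> \<F>))"
    unfolding the_ideal_eq_bideal_generators
    using finite_generators generators_in_bpolys[OF \<open>\<Q> \<subseteq> Pow {1..n}\<close> \<open>finite \<F>\<close>]
    by (rule card_SM_le_card_zeros)
  also have "\<dots> < card \<Q> ^ 2 * card (downclosure \<F>)"
    by (rule card_zeros_generators_less) fact+
  finally show False
    using assms(4) by simp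
qed

end
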